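(* Let PSSPM denote the set of all configurations reachable in the Parallel Symmetric Sand Pile Model from some initial configuration $(\underline{n})$, $n\in\mathbb N$, and SSPM the set of all configurations reachable in the Symmetric Sand Pile Model from some initial configuration $(\underline{n})$, $n \in \mathbb N$. Then PSSPM $\subsetneq$ SSPM.
   Context: A configuration is a sequence $(c_i)_{i\in\mathbb Z}$ of nonnegative integers with only finitely many positive values. For $n\in\mathbb N$, $(\underline{n})$ denotes the configuration with $c_0=n$ and $c_i=0$ for $i\neq 0$. Two local rules act on a column $i$: rule $\mathcal L$ at $i$ is applicable if $c_{i-1}+2\le c_i$ and moves one grain from column $i$ to column $i-1$ ($c_{i-1}\mapsto c_{i-1}+1$, $c_i\mapsto c_i-1$); rule $\mathcal R$ at $i$ is applicable if $c_i\ge c_{i+1}+2$ and moves one grain from column $i$ to column $i+1$. In SSPM, one transition consists of applying exactly once one applicable rule ($\mathcal L$ or $\mathcal R$) at one column. In PSSPM, one transition consists of applying rules simultaneously on every column where some rule is applicable, applying at most one of the two rules on each column (where both are applicable, one of them is chosen). A configuration is reachable in a model from $(\underline{n})$ if it is obtained from $(\underline{n})$ by a finite (possibly empty) sequence of transitions of that model. *)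

theory Defs
  imports Main
begin

type_synonym config = "int \<Rightarrow> nat"

definition is_config :: "config \<Rightarrow> bool" where
  "is_config c \<longleftrightarrow> finite {i. c i > 0}"

definition init :: "nat \<Rightarrow> config" where
  "init n = (\<lambda>i. if i = 0 then n else 0)"

definition L_applicable :: "config \<Rightarrow> int \<Rightarrow> bool" where
  "L_applicable c i \<longleftrightarrow> c (i - 1) + 2 \<le> c i"

definition R_applicable :: "config \<Rightarrow> int \<Rightarrow> bool" where
  "R_applicable c i \<longleftrightarrow> c (i + 1) + 2 \<le> c i"

definition apply_L :: "config \<Rightarrow> int \<Rightarrow> config" where
  "apply_L c i = (c(i - 1 := c (i - 1) + 1))(i := c i - 1)"

definition apply_R :: "config \<Rightarrow> int \<Rightarrow> config" where
  "apply_R c i = (c(i + 1 := c (i + 1) + 1))(i := c i - 1)"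

definition sspm_step :: "config \<Rightarrow> config \<Rightarrow> bool" where
  "sspm_step c c' \<longleftrightarrow>
     (\<exists>i. (L_applicable c i \<and> c' = apply_L c i) \<or> (R_applicable c i \<and> c' = apply_R c i))"

datatype action = NoRule | RuleL | RuleR

definition valid_choice :: "config \<Rightarrow> (int \<Rightarrow> action) \<Rightarrow> bool" where
  "valid_choice c a \<longleftrightarrow>
     (\<forall>i. (a i = RuleL \<longrightarrow> L_applicable c i)
        \<and> (a i = RuleR \<longrightarrow> R_applicable c i)
        \<and> (a i = NoRule \<longleftrightarrow> \<not> L_applicable c i \<and> \<not> R_applicable c i))"

definition apply_parallel :: "config \<Rightarrow> (int \<Rightarrow> action) \<Rightarrow> config" where
  "apply_parallel c a = (\<lambda>i. c i - (if a i = NoRule then 0 else 1)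
        + (if a (i + 1) = RuleL then 1 else 0) + (if a (i - 1) = RuleR then 1 else 0))"

definition psspm_step :: "config \<Rightarrow> config \<Rightarrow> bool" where
  "psspm_step c c' \<longleftrightarrow> (\<exists>a. valid_choice c a \<and> c' = apply_parallel c a)"

definition SSPM :: "config set" where
  "SSPM = {c. \<exists>n. sspm_step\<^sup>*\<^sup>* (init n) c}"

definition PSSPM :: "config set" where
  "PSSPM = {c. \<exists>n. psspm_step\<^sup>*\<^sup>* (init n) c}"

end

(*
  On a unimodal configuration an R rule at i and an L rule at i + 2 never fire together,
  because they would require c (i + 1) to be a strict valley.  Without such pairs the
  parallel update can be carried out one rule at a time, i.e. as a sequence of SSPM moves.
  Parallel steps also preserve unimodality, and (n) is unimodal, so PSSPM \<subseteq> SSPM.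

  For strictness, SSPM moves conserve the number of grains, so (1,1,2) (columns -2, -1, 0)
  can only be reached from (4).  SSPM reaches it via (4), (1,3), (2,2), but in PSSPM (2,2)
  must fire both of its columns at once, and the PSSPM orbit of (4) has just eight elements.
*)
theory Submission
  imports Defs
begin

section \<open>Conservation of grains\<close>

lemma sum_fun_upd_add:
  fixes f :: "'a \<Rightarrow> 'b::comm_monoid_add"
  assumes "finite A" "a \<in> A"
  shows "sum (f(a := y)) A + f a = sum f A + y"
proof -
  have "sum (f(a := y)) A = y + sum f (A - {a})"
    using assms by (simp add: sum.remove)
  moreover have "sum f A = f a + sum f (A - {a})"
    using assms by (simp add: sum.remove)
  ultimately show ?thesis by (simp add: ac_simps)
qed

definition grains :: "config \<Rightarrow> nat" where
  "grains c = (\<Sum>i | 0 < c i. c i)"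

lemma grains_eq_sum:
  assumes "finite S" "{i. 0 < c i} \<subseteq> S"
  shows "grains c = sum c S"
  unfolding grains_def using assms by (intro sum.mono_neutral_left) auto

lemma move_grain_preserves_grains:
  fixes c :: config
  assumes "is_config c" "0 < c j" "j \<noteq> j'"
  defines "c' \<equiv> (c(j' := c j' + 1))(j := c j - 1)"
  shows "is_config c'" "grains c' = grains c"
proof -
  let ?S = "insert j' {i. 0 < c i}"
  have fin: "finite ?S" using assms(1) by (simp add: is_config_def)
  have supp: "{i. 0 < c' i} \<subseteq> ?S" by (auto simp: c'_def)
  then show "is_config c'" unfolding is_config_def using fin by (rule finite_subset)
  have "sum c' ?S + c j = sum (c(j' := c j' + 1)) ?S + (c j - 1)"
    using sum_fun_upd_add[OF fin, of j "c(j' := c j' + 1)" "c j - 1"] assms(2,3)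
    by (simp add: c'_def)
  also have "\<dots> + c j' = sum c ?S + (c j' + 1) + (c j - 1)"
    using sum_fun_upd_add[OF fin, of j' c "c j' + 1"] by simp
  finally have "sum c' ?S = sum c ?S"
    using assms(2,3) by simp
  then show "grains c' = grains c"
    using grains_eq_sum[OF fin supp] grains_eq_sum[OF fin subset_insertI] by simp
qed

lemma sspm_step_preserves_grains:
  assumes "is_config c" "sspm_step c c'"
  shows "is_config c' \<and> grains c' = grains c"
proof -
  obtain i where "(L_applicable c i \<and> c' = apply_L c i) \<or> (R_applicable c i \<and> c' = apply_R c i)"
    using assms(2) unfolding sspm_step_def by blast
  then show ?thesis
    using move_grain_preserves_grains[OF assms(1), of i "i - 1"] move_grain_preserves_grains[OF assms(1), of i "i + 1"]
    by (auto simp: L_applicable_def R_applicable_def apply_L_def apply_R_def)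
qed

lemma is_config_init: "is_config (init n)"
  unfolding is_config_def init_def by (rule finite_subset[of _ "{0}"]) auto

lemma grains_init: "grains (init n) = n"
proof -
  have "grains (init n) = sum (init n) {0}" by (rule grains_eq_sum) (auto simp: init_def)
  then show ?thesis by (simp add: init_def)
qed

lemma sspm_reachable_grains:
  assumes "sspm_step\<^sup>*\<^sup>* (init n) c"
  shows "is_config c \<and> grains c = n"
  using assms
proof (induction rule: rtranclp_induct)
  case base
  show ?case using is_config_init grains_init by simp
next
  case (step c c')
  then show ?case using sspm_step_preserves_grains by auto
qed

section \<open>Sequentialising a parallel step\<close>

definition rules_applicable :: "config \<Rightarrow> (int \<Rightarrow> action) \<Rightarrow> bool" where
  "rules_applicable c a \<longleftrightarrow>
     (\<forall>i. (a i = RuleL \<longrightarrow> L_applicable c i) \<and> (a i = RuleR \<longrightarrow> R_applicable c i))"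

(* An R rule at i and an L rule at i + 2 both feed column i + 1, so firing one of them first
   may disable the other. *)
definition no_shared_target :: "(int \<Rightarrow> action) \<Rightarrow> bool" where
  "no_shared_target a \<longleftrightarrow> (\<forall>i. a i = RuleR \<longrightarrow> a (i + 2) \<noteq> RuleL)"

lemma valid_choice_rules_applicable: "valid_choice c a \<Longrightarrow> rules_applicable c a"
  unfolding valid_choice_def rules_applicable_def by blast

lemma rules_applicable_active_ge2:
  "rules_applicable c a \<Longrightarrow> a i \<noteq> NoRule \<Longrightarrow> 2 \<le> c i"
  unfolding rules_applicable_def L_applicable_def R_applicable_def
  by (metis action.exhaust le_add2 le_trans)

lemma fire_L_first:
  assumes appl: "rules_applicable c a" and nst: "no_shared_target a" and aj: "a j = RuleL"
  shows "rules_applicable (apply_L c j) (a(j := NoRule))"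
    and "apply_parallel (apply_L c j) (a(j := NoRule)) = apply_parallel c a"
proof -
  have cj: "2 \<le> c j" using rules_applicable_active_ge2[OF appl] aj by simp
  have "a (j - 2) \<noteq> RuleR" using nst aj unfolding no_shared_target_def by (metis diff_add_cancel)
  then show "rules_applicable (apply_L c j) (a(j := NoRule))"
    unfolding rules_applicable_def
  proof (intro allI conjI impI)
    fix i assume "(a(j := NoRule)) i = RuleL"
    then show "L_applicable (apply_L c j) i"
      using appl cj unfolding rules_applicable_def
      by (auto simp: L_applicable_def apply_L_def split: if_splits)
  next
    fix i assume "(a(j := NoRule)) i = RuleR"
    then have "i \<noteq> j" "i \<noteq> j - 2" "R_applicable c i"
      using appl \<open>a (j - 2) \<noteq> RuleR\<close> unfolding rules_applicable_def by (auto split: if_splits)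
    then show "R_applicable (apply_L c j) i"
      using cj by (auto simp: R_applicable_def apply_L_def)
  qed
  \<comment> \<open>if column \<open>j - 1\<close> is active then \<open>c (j - 1) \<ge> 2\<close>, so the truncated subtraction there is exact\<close>
  show "apply_parallel (apply_L c j) (a(j := NoRule)) = apply_parallel c a"
    using cj aj rules_applicable_active_ge2[OF appl, of "j - 1"]
    by (auto simp: apply_parallel_def apply_L_def fun_eq_iff)
qed

lemma fire_R_first:
  assumes appl: "rules_applicable c a" and nst: "no_shared_target a" and aj: "a j = RuleR"
  shows "rules_applicable (apply_R c j) (a(j := NoRule))"
    and "apply_parallel (apply_R c j) (a(j := NoRule)) = apply_parallel c a"
proof -
  have cj: "2 \<le> c j" using rules_applicable_active_ge2[OF appl] aj by simp
  have "a (j + 2) \<noteq> RuleL" using nst aj unfolding no_shared_target_def by blast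
  then show "rules_applicable (apply_R c j) (a(j := NoRule))"
    unfolding rules_applicable_def
  proof (intro allI conjI impI)
    fix i assume "(a(j := NoRule)) i = RuleR"
    then show "R_applicable (apply_R c j) i"
      using appl cj unfolding rules_applicable_def
      by (auto simp: R_applicable_def apply_R_def split: if_splits)
  next
    fix i assume "(a(j := NoRule)) i = RuleL"
    then have "i \<noteq> j" "i \<noteq> j + 2" "L_applicable c i"
      using appl \<open>a (j + 2) \<noteq> RuleL\<close> unfolding rules_applicable_def by (auto split: if_splits)
    then show "L_applicable (apply_R c j) i"
      using cj by (auto simp: L_applicable_def apply_R_def)
  qed
  show "apply_parallel (apply_R c j) (a(j := NoRule)) = apply_parallel c a"
    using cj aj rules_applicable_active_ge2[OF appl, of "j + 1"]
    by (auto simp: apply_parallel_def apply_R_def fun_eq_iff)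
qed

lemma apply_parallel_NoRule: "apply_parallel c (\<lambda>_. NoRule) = c"
  by (simp add: apply_parallel_def)

lemma sspm_steps_apply_parallel:
  assumes "finite {i. a i \<noteq> NoRule}" "rules_applicable c a" "no_shared_target a"
  shows "sspm_step\<^sup>*\<^sup>* c (apply_parallel c a)"
  using assms
proof (induction "card {i. a i \<noteq> NoRule}" arbitrary: a c)
  case 0
  then have "a = (\<lambda>_. NoRule)" by auto
  then show ?case by (simp add: apply_parallel_NoRule)
next
  case (Suc n)
  then obtain j where j: "a j \<noteq> NoRule" by fastforce
  let ?a' = "a(j := NoRule)"
  have "{i. ?a' i \<noteq> NoRule} = {i. a i \<noteq> NoRule} - {j}" by auto
  then have card: "n = card {i. ?a' i \<noteq> NoRule}" and fin: "finite {i. ?a' i \<noteq> NoRule}"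
    using Suc.hyps(2) Suc.prems(1) j by auto
  have nst: "no_shared_target ?a'" using Suc.prems(3) by (auto simp: no_shared_target_def)
  obtain c' where step: "sspm_step c c'" and appl: "rules_applicable c' ?a'"
    and eq: "apply_parallel c' ?a' = apply_parallel c a"
  proof (cases "a j")
    case RuleL
    then have "sspm_step c (apply_L c j)"
      using Suc.prems(2) unfolding sspm_step_def rules_applicable_def by blast
    then show ?thesis using that fire_L_first[OF Suc.prems(2,3) RuleL] by blast
  next
    case RuleR
    then have "sspm_step c (apply_R c j)"
      using Suc.prems(2) unfolding sspm_step_def rules_applicable_def by blast
    then show ?thesis using that fire_R_first[OF Suc.prems(2,3) RuleR] by blast
  qed (use j in simp)
  have "sspm_step\<^sup>*\<^sup>* c' (apply_parallel c' ?a')"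
    using Suc.hyps(1)[OF card fin appl nst] .
  then show ?case using step eq by (simp add: converse_rtranclp_into_rtranclp)
qed

section \<open>Unimodality along PSSPM orbits\<close>

definition unimodal :: "(int \<Rightarrow> 'a::linorder) \<Rightarrow> bool" where
  "unimodal f \<longleftrightarrow> (\<exists>m. (\<forall>x<m. f x \<le> f (x + 1)) \<and> (\<forall>x\<ge>m. f (x + 1) \<le> f x))"

lemma unimodal_init: "unimodal (init n)"
  unfolding unimodal_def init_def by (intro exI[of _ 0]) auto

lemma unimodal_no_strict_valley:
  assumes "unimodal f"
  shows "\<not> (f (x + 1) < f x \<and> f (x + 1) < f (x + 2))"
proof -
  obtain m where up: "\<forall>x<m. f x \<le> f (x + 1)" and down: "\<forall>x\<ge>m. f (x + 1) \<le> f x"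
    using assms unfolding unimodal_def by blast
  show ?thesis
  proof (cases "x < m")
    case True
    then show ?thesis using up by force
  next
    case False
    then have "f (x + 2) \<le> f (x + 1)" using down[rule_format, of "x + 1"] by (simp add: add.assoc)
    then show ?thesis by auto
  qed
qed

lemma unimodal_no_shared_target:
  assumes "unimodal c" "valid_choice c a"
  shows "no_shared_target a"
  unfolding no_shared_target_def
proof (intro allI impI notI)
  fix i assume "a i = RuleR" "a (i + 2) = RuleL"
  then have "R_applicable c i" "L_applicable c (i + 2)"
    using valid_choice_rules_applicable[OF assms(2)] unfolding rules_applicable_def by blast+
  moreover have "i + 2 - 1 = i + 1" by simp
  ultimately show False
    using unimodal_no_strict_valley[OF assms(1), of i]
    by (simp add: L_applicable_def R_applicable_def)
qed

lemma unimodal_if_monotone_off_peak: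
  fixes f :: "int \<Rightarrow> 'a::linorder"
  assumes up: "\<And>x. x + 1 < m \<Longrightarrow> f x \<le> f (x + 1)"
    and down: "\<And>x. m < x \<Longrightarrow> f (x + 1) \<le> f x"
    and not_valley: "\<not> (f m < f (m - 1) \<and> f m < f (m + 1))"
  shows "unimodal f"
proof -
  consider "f m < f (m + 1)" | "f m < f (m - 1)" | "f (m - 1) \<le> f m" "f (m + 1) \<le> f m"
    by fastforce
  then show ?thesis
  proof cases
    case 1
    with not_valley have "f (m - 1) \<le> f m" by auto
    with 1 have "(\<forall>x<m + 1. f x \<le> f (x + 1)) \<and> (\<forall>x\<ge>m + 1. f (x + 1) \<le> f x)"
      using up down by (smt (verit) order_less_imp_le)
    then show ?thesis unfolding unimodal_def by blast
  next
    case 2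
    with not_valley have "f (m + 1) \<le> f m" by auto
    with 2 have "(\<forall>x<m - 1. f x \<le> f (x + 1)) \<and> (\<forall>x\<ge>m - 1. f (x + 1) \<le> f x)"
      using up down by (smt (verit) order_less_imp_le)
    then show ?thesis unfolding unimodal_def by blast
  next
    case 3
    then have "(\<forall>x<m. f x \<le> f (x + 1)) \<and> (\<forall>x\<ge>m. f (x + 1) \<le> f x)"
      using up down by (smt (verit))
    then show ?thesis unfolding unimodal_def by blast
  qed
qed

lemma unimodal_apply_parallel:
  assumes "unimodal c" "valid_choice c a"
  shows "unimodal (apply_parallel c a)"
proof -
  obtain m where up: "\<forall>x<m. c x \<le> c (x + 1)" and down: "\<forall>x\<ge>m. c (x + 1) \<le> c x"
    using assms(1) unfolding unimodal_def by blast
  have appl: "(a x = RuleL \<longrightarrow> c (x - 1) + 2 \<le> c x) \<and> (a x = RuleR \<longrightarrow> c (x + 1) + 2 \<le> c x)"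
    for x using valid_choice_rules_applicable[OF assms(2)]
    by (simp add: rules_applicable_def L_applicable_def R_applicable_def)
  have noR: "a x \<noteq> RuleR" if "x < m" for x
    using up appl[of x] that by force
  have noL: "a x \<noteq> RuleL" if "m < x" for x
    using down[rule_format, of "x - 1"] appl[of x] that by force
  show ?thesis
  proof (rule unimodal_if_monotone_off_peak[of m])
    fix x assume "x + 1 < m"
    then have "a (x - 1) \<noteq> RuleR" "a x \<noteq> RuleR" "a (x + 1) \<noteq> RuleR" "c x \<le> c (x + 1)"
      using noR up by auto
    then show "apply_parallel c a x \<le> apply_parallel c a (x + 1)"
      using appl[of x] appl[of "x + 1"] unfolding apply_parallel_def
      by (cases "a x"; cases "a (x + 1)"; cases "a (x + 2)") (auto simp: algebra_simps)
  next
    fix x assume "m < x"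
    then have "a (x + 2) \<noteq> RuleL" "a x \<noteq> RuleL" "a (x + 1) \<noteq> RuleL" "c (x + 1) \<le> c x"
      using noL down by auto
    then show "apply_parallel c a (x + 1) \<le> apply_parallel c a x"
      using appl[of x] appl[of "x + 1"] unfolding apply_parallel_def
      by (cases "a x"; cases "a (x + 1)"; cases "a (x - 1)") (auto simp: algebra_simps)
  next
    have "a (m - 1) \<noteq> RuleR" "a (m - 2) \<noteq> RuleR" "a (m + 1) \<noteq> RuleL" "a (m + 2) \<noteq> RuleL"
      "c (m - 1) \<le> c m" "c (m + 1) \<le> c m"
      using noR noL up[rule_format, of "m - 1"] down by auto
    then show "\<not> (apply_parallel c a m < apply_parallel c a (m - 1) \<and>
                  apply_parallel c a m < apply_parallel c a (m + 1))"
      using appl[of m] appl[of "m - 1"] appl[of "m + 1"] unfolding apply_parallel_def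
      by (cases "a m"; cases "a (m - 1)"; cases "a (m + 1)") (auto simp: algebra_simps)
  qed
qed

lemma is_config_apply_parallel:
  assumes "is_config c" "valid_choice c a"
  shows "is_config (apply_parallel c a)"
proof -
  let ?S = "{i. 0 < c i}"
  have "{i. 0 < apply_parallel c a i} \<subseteq> ?S \<union> (\<lambda>i. i - 1) ` ?S \<union> (\<lambda>i. i + 1) ` ?S"
  proof
    fix i assume "i \<in> {i. 0 < apply_parallel c a i}"
    then have "0 < c i \<or> a (i + 1) = RuleL \<or> a (i - 1) = RuleR"
      by (auto simp: apply_parallel_def split: if_splits)
    moreover have "0 < c (i + 1)" if "a (i + 1) = RuleL"
      using rules_applicable_active_ge2[OF valid_choice_rules_applicable[OF assms(2)], of "i + 1"] that by simp
    moreover have "0 < c (i - 1)" if "a (i - 1) = RuleR"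
      using rules_applicable_active_ge2[OF valid_choice_rules_applicable[OF assms(2)], of "i - 1"] that by simp
    ultimately show "i \<in> ?S \<union> (\<lambda>i. i - 1) ` ?S \<union> (\<lambda>i. i + 1) ` ?S"
      by (auto intro: image_eqI[of i _ "i + 1"] image_eqI[of i _ "i - 1"])
  qed
  moreover have "finite ?S" using assms(1) unfolding is_config_def .
  ultimately show ?thesis unfolding is_config_def by (meson finite_Un finite_imageI finite_subset)
qed

lemma finite_active_columns:
  assumes "is_config c" "valid_choice c a"
  shows "finite {i. a i \<noteq> NoRule}"
proof -
  have "{i. a i \<noteq> NoRule} \<subseteq> {i. 0 < c i}"
    using rules_applicable_active_ge2[OF valid_choice_rules_applicable[OF assms(2)]] by force
  then show ?thesis using assms(1) unfolding is_config_def by (rule finite_subset)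
qed

lemma psspm_reachable_sspm_reachable:
  assumes "psspm_step\<^sup>*\<^sup>* (init n) c"
  shows "is_config c \<and> unimodal c \<and> sspm_step\<^sup>*\<^sup>* (init n) c"
  using assms
proof (induction rule: rtranclp_induct)
  case base
  show ?case using is_config_init unimodal_init by simp
next
  case (step c d)
  then obtain a where a: "valid_choice c a" "d = apply_parallel c a"
    unfolding psspm_step_def by blast
  have "sspm_step\<^sup>*\<^sup>* c d"
    using a step.IH sspm_steps_apply_parallel finite_active_columns valid_choice_rules_applicable
      unimodal_no_shared_target by blast
  then show ?case
    using a step.IH unimodal_apply_parallel is_config_apply_parallel by auto
qed

lemma PSSPM_subset_SSPM: "PSSPM \<subseteq> SSPM"
  unfolding PSSPM_def SSPM_def using psspm_reachable_sspm_reachable by blast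

section \<open>The PSSPM orbit of (4)\<close>

fun heaps :: "(int \<times> nat) list \<Rightarrow> config" where
  "heaps [] = (\<lambda>_. 0)"
| "heaps ((i, k) # ps) = (heaps ps)(i := k)"

lemma valid_choice_NoRule:
  "valid_choice c a \<Longrightarrow> \<not> L_applicable c i \<Longrightarrow> \<not> R_applicable c i \<Longrightarrow> a i = NoRule"
  unfolding valid_choice_def by blast

lemma psspm_step_single_column:
  assumes "\<And>i. i \<noteq> j \<Longrightarrow> \<not> L_applicable c i \<and> \<not> R_applicable c i" "psspm_step c d"
  shows "d = c \<or> d = apply_L c j \<or> d = apply_R c j"
proof -
  obtain a where a: "valid_choice c a" "d = apply_parallel c a"
    using assms(2) unfolding psspm_step_def by blast
  have "a = (\<lambda>i. if i = j then r else NoRule)" if "a j = r" for r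
    using valid_choice_NoRule[OF a(1)] assms(1) that by fastforce
  then show ?thesis
    unfolding a(2)
    by (cases "a j") (auto simp: apply_parallel_def apply_L_def apply_R_def fun_eq_iff)
qed

definition forced_choice :: "config \<Rightarrow> int \<Rightarrow> action" where
  "forced_choice c i =
     (if L_applicable c i then RuleL else if R_applicable c i then RuleR else NoRule)"

lemma psspm_step_forced:
  assumes "\<And>i. \<not> (L_applicable c i \<and> R_applicable c i)" "psspm_step c d"
  shows "d = apply_parallel c (forced_choice c)"
proof -
  obtain a where a: "valid_choice c a" "d = apply_parallel c a"
    using assms(2) unfolding psspm_step_def by blast
  have "a = forced_choice c"
  proof
    fix i show "a i = forced_choice c i"
      using a(1) assms(1)[of i] unfolding valid_choice_def forced_choice_def
      by (metis action.exhaust)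
  qed
  then show ?thesis using a(2) by simp
qed

lemma psspm_successors_two_rules:
  assumes "c \<in> {init 4, heaps [(-1, 1), (0, 3)], heaps [(0, 3), (1, 1)]}" "psspm_step c d"
  shows "d \<in> {init 4, heaps [(-1, 1), (0, 3)], heaps [(0, 3), (1, 1)],
    heaps [(-1, 2), (0, 2)], heaps [(0, 2), (1, 2)], heaps [(-1, 1), (0, 2), (1, 1)]}"
proof -
  have "apply_L (init 4) 0 = heaps [(-1, 1), (0, 3)]"
    "apply_R (init 4) 0 = heaps [(0, 3), (1, 1)]"
    "apply_L (heaps [(-1, 1), (0, 3)]) 0 = heaps [(-1, 2), (0, 2)]"
    "apply_R (heaps [(-1, 1), (0, 3)]) 0 = heaps [(-1, 1), (0, 2), (1, 1)]"
    "apply_L (heaps [(0, 3), (1, 1)]) 0 = heaps [(-1, 1), (0, 2), (1, 1)]"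
    "apply_R (heaps [(0, 3), (1, 1)]) 0 = heaps [(0, 2), (1, 2)]"
    by (auto simp: fun_eq_iff init_def apply_L_def apply_R_def)
  moreover have "\<not> L_applicable c i \<and> \<not> R_applicable c i" if "i \<noteq> 0" for i
    using assms(1) that by (auto simp: init_def L_applicable_def R_applicable_def split: if_splits)
  ultimately show ?thesis
    using assms psspm_step_single_column[of 0 c d] by auto
qed

lemma psspm_successors_forced:
  assumes "c \<in> {heaps [(-1, 2), (0, 2)], heaps [(0, 2), (1, 2)], heaps [(-1, 1), (0, 2), (1, 1)],
    heaps [(-2, 1), (-1, 1), (0, 1), (1, 1)], heaps [(-1, 1), (0, 1), (1, 1), (2, 1)]}"
    (is "c \<in> ?S") and "psspm_step c d"
  shows "d \<in> ?S"
proof -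
  have "forced_choice (heaps [(-1, 2), (0, 2)]) =
      (\<lambda>i. if i = -1 then RuleL else if i = 0 then RuleR else NoRule)"
    "forced_choice (heaps [(0, 2), (1, 2)]) =
      (\<lambda>i. if i = 0 then RuleL else if i = 1 then RuleR else NoRule)"
    "forced_choice (heaps [(-1, 1), (0, 2), (1, 1)]) = (\<lambda>_. NoRule)"
    "forced_choice (heaps [(-2, 1), (-1, 1), (0, 1), (1, 1)]) = (\<lambda>_. NoRule)"
    "forced_choice (heaps [(-1, 1), (0, 1), (1, 1), (2, 1)]) = (\<lambda>_. NoRule)"
    by (auto simp: fun_eq_iff forced_choice_def L_applicable_def R_applicable_def)
  moreover have
    "apply_parallel (heaps [(-1, 2), (0, 2)])
      (\<lambda>i. if i = -1 then RuleL else if i = 0 then RuleR else NoRule) =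
     heaps [(-2, 1), (-1, 1), (0, 1), (1, 1)]"
    "apply_parallel (heaps [(0, 2), (1, 2)])
      (\<lambda>i. if i = 0 then RuleL else if i = 1 then RuleR else NoRule) =
     heaps [(-1, 1), (0, 1), (1, 1), (2, 1)]"
    by (auto simp: fun_eq_iff apply_parallel_def)
  ultimately have "apply_parallel c (forced_choice c) \<in> ?S"
    using assms(1) by (auto simp: apply_parallel_NoRule)
  moreover have "\<not> (L_applicable c i \<and> R_applicable c i)" for i
    using assms(1) by (auto simp: L_applicable_def R_applicable_def split: if_splits)
  ultimately show ?thesis
    using assms(2) psspm_step_forced by auto
qed

lemma psspm_orbit_init4:
  assumes "psspm_step\<^sup>*\<^sup>* (init 4) c"
  shows "c \<in> {init 4, heaps [(-1, 1), (0, 3)], heaps [(0, 3), (1, 1)],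
    heaps [(-1, 2), (0, 2)], heaps [(0, 2), (1, 2)], heaps [(-1, 1), (0, 2), (1, 1)],
    heaps [(-2, 1), (-1, 1), (0, 1), (1, 1)], heaps [(-1, 1), (0, 1), (1, 1), (2, 1)]}"
  using assms
proof (induction rule: rtranclp_induct)
  case (step c d)
  then show ?case
    using psspm_successors_two_rules[of c d] psspm_successors_forced[of c d] by blast
qed simp

lemma sspm_reaches_112: "sspm_step\<^sup>*\<^sup>* (init 4) (heaps [(-2, 1), (-1, 1), (0, 2)])"
proof -
  have "sspm_step (init 4) (heaps [(-1, 1), (0, 3)])"
    unfolding sspm_step_def
    by (intro exI[of _ 0] disjI1) (auto simp: init_def L_applicable_def apply_L_def fun_eq_iff)
  moreover have "sspm_step (heaps [(-1, 1), (0, 3)]) (heaps [(-1, 2), (0, 2)])"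
    unfolding sspm_step_def
    by (intro exI[of _ 0] disjI1) (auto simp: L_applicable_def apply_L_def fun_eq_iff)
  moreover have "sspm_step (heaps [(-1, 2), (0, 2)]) (heaps [(-2, 1), (-1, 1), (0, 2)])"
    unfolding sspm_step_def
    by (intro exI[of _ "-1"] disjI1) (auto simp: L_applicable_def apply_L_def fun_eq_iff)
  ultimately show ?thesis by (meson converse_rtranclp_into_rtranclp rtranclp.rtrancl_refl)
qed

lemma grains_112: "grains (heaps [(-2, 1), (-1, 1), (0, 2)]) = 4"
proof -
  have "grains (heaps [(-2, 1), (-1, 1), (0, 2)]) =
      sum (heaps [(-2, 1), (-1, 1), (0, 2)]) {-2, -1, 0}"
    by (rule grains_eq_sum) auto
  then show ?thesis by simp
qed

lemma psspm_not_reaches_112: "\<not> psspm_step\<^sup>*\<^sup>* (init 4) (heaps [(-2, 1), (-1, 1), (0, 2)])"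
proof -
  have "c (-2) = 0 \<or> c 0 \<noteq> 2" if "psspm_step\<^sup>*\<^sup>* (init 4) c" for c
    using psspm_orbit_init4[OF that] by (auto simp: init_def)
  then show ?thesis by fastforce
qed

theorem proposition1:
  shows "PSSPM \<subset> SSPM"
proof -
  let ?c = "heaps [(-2, 1), (-1, 1), (0, 2)]"
  have "?c \<in> SSPM" using sspm_reaches_112 unfolding SSPM_def by blast
  moreover have "?c \<notin> PSSPM"
  proof
    assume "?c \<in> PSSPM"
    then obtain n where reach: "psspm_step\<^sup>*\<^sup>* (init n) ?c" unfolding PSSPM_def by blast
    then have "n = 4"
      using psspm_reachable_sspm_reachable sspm_reachable_grains grains_112 by metis
    with reach psspm_not_reaches_112 show False by simp
  qed
  ultimately show ?thesis using PSSPM_subset_SSPM by blast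
qed

end
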